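(* For $i\in\{1,\dots,m\}$ let $q_i(y)=y^\top A_iy+2b_i^\top y+c_i$ with $A_i\in\mathbb{S}^{n-1}$, $b_i\in\mathbb{R}^{n-1}$, $c_i\in\mathbb{R}$, let $M_i=\begin{pmatrix}c_i & b_i^\top\\ b_i & A_i\end{pmatrix}\in\mathbb{S}^n$, $\mathcal{M}=\{M_1,\dots,M_m\}$, and $\mathcal{Y}=\{y\in\mathbb{R}^{n-1}: q_i(y)\ge 0\ \forall i\in\{1,\dots,m\}\}$. Suppose there exists $\lambda^*\in\mathbb{R}^m_+$ such that $\sum_{i=1}^m\lambda^*_iA_i$ is negative definite. If $\mathcal{S}(\mathcal{M})$ is rank-one generated, then $$\mathrm{conv}(\mathcal{Y})=\left\{y\in\mathbb{R}^{n-1}:\ \exists\, Y\in\mathbb{S}^{n-1},\ Y\succeq yy^\top,\ \langle A_i,Y\rangle+2\langle b_i,y\rangle+c_i\ge 0\ \forall i\in\{1,\dots,m\}\right\};$$ in particular $\mathrm{conv}(\mathcal{Y})$ is semidefinite-representable.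
   Context: $\mathbb{S}^n$ denotes real symmetric $n\times n$ matrices with $\langle A,B\rangle=\mathrm{tr}(AB)$, $\mathbb{S}^n_+$ the PSD cone, and $Y\succeq Z$ means $Y-Z$ is PSD. For $\mathcal{M}\subseteq\mathbb{S}^n$, $\mathcal{S}(\mathcal{M})=\{X\in\mathbb{S}^n_+:\langle M,X\rangle\ge0\ \forall M\in\mathcal{M}\}$. A closed convex cone $\mathcal{S}\subseteq\mathbb{S}^n_+$ is rank-one generated (ROG) if $\mathcal{S}=\mathrm{conv}(\mathcal{S}\cap\{xx^\top:x\in\mathbb{R}^n\})$. *)

theory Defs
  imports "HOL-Analysis.Analysis"
begin

definition sym_mat :: "real^'k^'k \<Rightarrow> bool" where
  "sym_mat A \<longleftrightarrow> transpose A = A"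

definition psd :: "real^'k^'k \<Rightarrow> bool" where
  "psd A \<longleftrightarrow> sym_mat A \<and> (\<forall>x. 0 \<le> x \<bullet> (A *v x))"

definition neg_def :: "real^'k^'k \<Rightarrow> bool" where
  "neg_def A \<longleftrightarrow> sym_mat A \<and> (\<forall>x. x \<noteq> 0 \<longrightarrow> x \<bullet> (A *v x) < 0)"

definition frob :: "real^'k^'k \<Rightarrow> real^'k^'k \<Rightarrow> real" where
  "frob A B = trace (A ** B)"

definition outer :: "real^'k \<Rightarrow> real^'k \<Rightarrow> real^'k^'k" where
  "outer x y = (\<chi> i j. x $ i * y $ j)"

definition S_cone :: "(real^'k^'k) set \<Rightarrow> (real^'k^'k) set" where
  "S_cone \<M> = {X. psd X \<and> (\<forall>M\<in>\<M>. 0 \<le> frob M X)}"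

definition ROG :: "(real^'k^'k) set \<Rightarrow> bool" where
  "ROG S \<longleftrightarrow> S = convex hull (S \<inter> range (\<lambda>x. outer x x))"

text \<open>The lifted matrix [[c, b^T],[b, A]] in S^n; index Inl () plays the role of
  the first (0-th) coordinate, Inr i the remaining n-1 coordinates.\<close>
definition lift_mat :: "real^'k^'k \<Rightarrow> real^'k \<Rightarrow> real \<Rightarrow> real^(unit + 'k)^(unit + 'k)" where
  "lift_mat A b c = (\<chi> i j. (case i of
       Inl _ \<Rightarrow> (case j of Inl _ \<Rightarrow> c | Inr j' \<Rightarrow> b $ j')
     | Inr i' \<Rightarrow> (case j of Inl _ \<Rightarrow> b $ i' | Inr j' \<Rightarrow> A $ i' $ j')))"

definition quad :: "real^'k^'k \<Rightarrow> real^'k \<Rightarrow> real \<Rightarrow> real^'k \<Rightarrow> real" where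
  "quad A b c y = y \<bullet> (A *v y) + 2 * (b \<bullet> y) + c"

end

theory Submission
  imports Defs
begin

text \<open>Lift y to X = [[1, y^T], [y, Y]]. By a Schur complement, Y - y y^T is PSD iff X is, so the
  right-hand side is the projection of the slice X_00 = 1 of S(M): it is convex and contains
  every feasible y (take Y = y y^T). Conversely, if S(M) is rank-one generated, such an X is a
  convex combination of matrices x x^T in S(M). Comparing first columns, y is a convex combination
  of the points z/s for those x = (s, z) with s \<noteq> 0, and x^T M_i x \<ge> 0 says exactly that these
  points are feasible.\<close>

definition lift_vec :: "real \<Rightarrow> real^'k \<Rightarrow> real^(unit + 'k)" where
  "lift_vec s z = (\<chi> i. case i of Inl _ \<Rightarrow> s | Inr j \<Rightarrow> z $ j)"

lemma lift_vec_head_tail: "lift_vec (x $ Inl ()) (\<chi> j. x $ Inr j) = x"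
  by (simp add: lift_vec_def vec_eq_iff split: sum.split)

lemma scaleR_lift_vec: "a *\<^sub>R lift_vec s z = lift_vec (a * s) (a *\<^sub>R z)"
  by (simp add: lift_vec_def vec_eq_iff split: sum.split)

lemma sum_UNIV_Plus:
  "(\<Sum>i\<in>UNIV. f i) = f (Inl ()) + (\<Sum>j\<in>UNIV. f (Inr j))"
  for f :: "unit + 'b::finite \<Rightarrow> 'c::comm_monoid_add"
  by (simp add: UNIV_Plus_UNIV[symmetric] sum.Plus UNIV_unit del: UNIV_Plus_UNIV)

lemma inner_lift_vec: "lift_vec s z \<bullet> lift_vec t w = s * t + z \<bullet> w"
  by (simp add: inner_vec_def sum_UNIV_Plus lift_vec_def)

lemma lift_mat_mult_lift_vec:
  "lift_mat A b c *v lift_vec s z = lift_vec (c * s + b \<bullet> z) (s *\<^sub>R b + A *v z)"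
  by (simp add: vec_eq_iff lift_mat_def lift_vec_def matrix_vector_mult_def sum_UNIV_Plus
      inner_vec_def mult.commute split: sum.split)

lemma quadratic_form_lift_mat:
  "lift_vec s z \<bullet> (lift_mat A b c *v lift_vec s z) = c * s\<^sup>2 + 2 * s * (b \<bullet> z) + z \<bullet> (A *v z)"
  by (simp add: lift_mat_mult_lift_vec inner_lift_vec inner_add_right inner_commute
      power2_eq_square algebra_simps)

lemma quad_eq_quadratic_form_lift_mat:
  "quad A b c y = lift_vec 1 y \<bullet> (lift_mat A b c *v lift_vec 1 y)"
  by (simp add: quadratic_form_lift_mat quad_def)

lemma outer_lift_vec:
  "outer (lift_vec s z) (lift_vec s z) = lift_mat (outer z z) (s *\<^sub>R z) (s\<^sup>2)"
  by (simp add: vec_eq_iff outer_def lift_mat_def lift_vec_def power2_eq_square mult.commute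
      split: sum.split)

lemma sum_scaleR_lift_mat:
  "(\<Sum>i\<in>I. u i *\<^sub>R lift_mat (A i) (b i) (c i)) =
     lift_mat (\<Sum>i\<in>I. u i *\<^sub>R A i) (\<Sum>i\<in>I. u i *\<^sub>R b i) (\<Sum>i\<in>I. u i * c i)"
  by (simp add: vec_eq_iff lift_mat_def sum_component split: sum.split)

lemma lift_mat_add:
  "lift_mat A b c + lift_mat A' b' c' = lift_mat (A + A') (b + b') (c + c')"
  by (simp add: vec_eq_iff lift_mat_def split: sum.split)

lemma scaleR_lift_mat: "a *\<^sub>R lift_mat A b c = lift_mat (a *\<^sub>R A) (a *\<^sub>R b) (a * c)"
  by (simp add: vec_eq_iff lift_mat_def split: sum.split)

lemma lift_mat_eq_iff:
  "lift_mat A b c = lift_mat A' b' c' \<longleftrightarrow> A = A' \<and> b = b' \<and> c = c'"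
  by (auto simp: vec_eq_iff lift_mat_def dest: spec[of _ "Inl ()"] spec[of _ "Inr _"]
      split: sum.split)

lemma frob_outer: "frob M (outer x x) = x \<bullet> (M *v x)"
  by (simp add: frob_def trace_def matrix_matrix_mult_def outer_def inner_vec_def
      matrix_vector_mult_def sum_distrib_left mult_ac)

lemma frob_add_right: "frob M (P + Q) = frob M P + frob M Q"
  by (simp add: frob_def matrix_add_ldistrib trace_add)

lemma frob_scaleR_right: "frob M (a *\<^sub>R P) = a * frob M P"
  by (simp add: frob_def trace_def matrix_matrix_mult_def sum_distrib_left mult_ac)

lemma frob_lift_mat:
  "frob (lift_mat A b c) (lift_mat Y y 1) = frob A Y + 2 * (b \<bullet> y) + c"
  by (simp add: frob_def trace_def matrix_matrix_mult_def sum_UNIV_Plus lift_mat_def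
      inner_vec_def sum.distrib algebra_simps)

lemma psd_add: "psd P \<Longrightarrow> psd Q \<Longrightarrow> psd (P + Q)"
  by (simp add: psd_def sym_mat_def transpose_def vec_eq_iff matrix_vector_mult_add_rdistrib
      inner_add_right add_nonneg_nonneg)

lemma psd_scaleR: "psd P \<Longrightarrow> 0 \<le> a \<Longrightarrow> psd (a *\<^sub>R P)"
  by (simp add: psd_def sym_mat_def transpose_def vec_eq_iff scaleR_matrix_vector_assoc[symmetric])

lemma outer_mult_vec: "outer y y *v x = (y \<bullet> x) *\<^sub>R y"
  by (simp add: vec_eq_iff outer_def matrix_vector_mult_def inner_vec_def sum_distrib_left mult_ac)

lemma psd_outer: "psd (outer x x)"
proof -
  have "sym_mat (outer x x)"
    by (simp add: sym_mat_def transpose_def vec_eq_iff outer_def mult.commute)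
  then show ?thesis
    by (simp add: psd_def outer_mult_vec inner_commute)
qed

lemma convex_S_cone: "convex (S_cone \<M>)"
  by (auto simp: convex_def S_cone_def intro!: psd_add psd_scaleR
      simp: frob_add_right frob_scaleR_right)

lemma sym_mat_lift_mat_iff: "sym_mat (lift_mat A b c) \<longleftrightarrow> sym_mat A"
  by (auto simp: sym_mat_def transpose_def lift_mat_def vec_eq_iff split: sum.split
      dest: spec[of _ "Inr _"])

lemma sym_mat_minus_outer_iff: "sym_mat (Y - outer y y) \<longleftrightarrow> sym_mat Y"
  by (simp add: sym_mat_def transpose_def vec_eq_iff outer_def mult.commute)

lemma psd_minus_outer_imp_sym_mat: "psd (Y - outer y y) \<Longrightarrow> sym_mat Y"
  by (simp add: psd_def sym_mat_minus_outer_iff)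

lemma quadratic_form_lift_mat_Schur:
  "lift_vec s z \<bullet> (lift_mat Y y 1 *v lift_vec s z) = (s + y \<bullet> z)\<^sup>2 + z \<bullet> ((Y - outer y y) *v z)"
  by (simp add: quadratic_form_lift_mat matrix_vector_mult_diff_rdistrib inner_diff_right
      outer_mult_vec inner_commute power2_eq_square algebra_simps)

lemma psd_lift_mat_iff: "psd (lift_mat Y y 1) \<longleftrightarrow> psd (Y - outer y y)"
proof -
  have "(\<forall>x. 0 \<le> x \<bullet> (lift_mat Y y 1 *v x)) \<longleftrightarrow> (\<forall>z. 0 \<le> z \<bullet> ((Y - outer y y) *v z))"
  proof
    assume "\<forall>x. 0 \<le> x \<bullet> (lift_mat Y y 1 *v x)"
    then show "\<forall>z. 0 \<le> z \<bullet> ((Y - outer y y) *v z)"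
      by (metis quadratic_form_lift_mat_Schur[of "- (y \<bullet> _)"] add.left_inverse
          zero_power2 add_0)
  next
    assume "\<forall>z. 0 \<le> z \<bullet> ((Y - outer y y) *v z)"
    then show "\<forall>x. 0 \<le> x \<bullet> (lift_mat Y y 1 *v x)"
      by (metis quadratic_form_lift_mat_Schur lift_vec_head_tail zero_le_power2 add_nonneg_nonneg)
  qed
  then show ?thesis
    by (simp add: psd_def sym_mat_lift_mat_iff sym_mat_minus_outer_iff)
qed

lemma convex_lifted_slice:
  fixes \<M> :: "(real^(unit + 'k::finite)^(unit + 'k)) set"
  shows "convex {y. \<exists>Y. lift_mat Y y 1 \<in> S_cone \<M>}"
proof (rule convexI, clarify)
  fix y1 y2 Y1 Y2 and u v :: real
  assume "lift_mat Y1 y1 1 \<in> S_cone \<M>" "lift_mat Y2 y2 1 \<in> S_cone \<M>"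
    and "0 \<le> u" "0 \<le> v" "u + v = 1"
  then have "u *\<^sub>R lift_mat Y1 y1 1 + v *\<^sub>R lift_mat Y2 y2 1 \<in> S_cone \<M>"
    by (rule convexD[OF convex_S_cone])
  then have "lift_mat (u *\<^sub>R Y1 + v *\<^sub>R Y2) (u *\<^sub>R y1 + v *\<^sub>R y2) 1 \<in> S_cone \<M>"
    using \<open>u + v = 1\<close> by (simp add: scaleR_lift_mat lift_mat_add)
  then show "\<exists>Y. lift_mat Y (u *\<^sub>R y1 + v *\<^sub>R y2) 1 \<in> S_cone \<M>" ..
qed

lemma dehomogenized_subset_lifted_slice:
  fixes \<M> :: "(real^(unit + 'k::finite)^(unit + 'k)) set"
  shows "{y. \<forall>M\<in>\<M>. 0 \<le> lift_vec 1 y \<bullet> (M *v lift_vec 1 y)} \<subseteq>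
         {y. \<exists>Y. lift_mat Y y 1 \<in> S_cone \<M>}"
proof clarify
  fix y :: "real^'k"
  assume "\<forall>M\<in>\<M>. 0 \<le> lift_vec 1 y \<bullet> (M *v lift_vec 1 y)"
  then have "outer (lift_vec 1 y) (lift_vec 1 y) \<in> S_cone \<M>"
    by (simp add: S_cone_def psd_outer frob_outer)
  then show "\<exists>Y. lift_mat Y y 1 \<in> S_cone \<M>"
    by (auto simp: outer_lift_vec)
qed

text \<open>The terms with s i = 0 contribute nothing to the first column, so they can be dropped.\<close>
lemma mem_convex_hull_dehomogenize:
  assumes "finite I" and "\<forall>i\<in>I. 0 \<le> u i"
    and "lift_mat Y y 1 = (\<Sum>i\<in>I. u i *\<^sub>R outer (lift_vec (s i) (z i)) (lift_vec (s i) (z i)))"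
  shows "y \<in> convex hull ((\<lambda>i. (1 / s i) *\<^sub>R z i) ` {i\<in>I. s i \<noteq> 0})"
proof -
  define J where "J = {i\<in>I. s i \<noteq> 0}"
  have "lift_mat Y y 1 =
      lift_mat (\<Sum>i\<in>I. u i *\<^sub>R outer (z i) (z i)) (\<Sum>i\<in>I. u i *\<^sub>R s i *\<^sub>R z i) (\<Sum>i\<in>I. u i * (s i)\<^sup>2)"
    using assms(3) by (simp add: outer_lift_vec sum_scaleR_lift_mat)
  then have y: "y = (\<Sum>i\<in>I. u i *\<^sub>R s i *\<^sub>R z i)" and one: "(\<Sum>i\<in>I. u i * (s i)\<^sup>2) = 1"
    unfolding lift_mat_eq_iff by simp_all
  have "(\<Sum>i\<in>J. u i * (s i)\<^sup>2) = (\<Sum>i\<in>I. u i * (s i)\<^sup>2)"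
    by (rule sum.mono_neutral_left) (auto simp: J_def assms(1))
  with one have weights: "(\<Sum>i\<in>J. u i * (s i)\<^sup>2) = 1"
    by simp
  have "(\<Sum>i\<in>J. (u i * (s i)\<^sup>2) *\<^sub>R ((1 / s i) *\<^sub>R z i)) = (\<Sum>i\<in>J. u i *\<^sub>R s i *\<^sub>R z i)"
    by (rule sum.cong) (auto simp: J_def power2_eq_square)
  also have "\<dots> = (\<Sum>i\<in>I. u i *\<^sub>R s i *\<^sub>R z i)"
    by (rule sum.mono_neutral_left) (auto simp: J_def assms(1))
  finally have "y = (\<Sum>i\<in>J. (u i * (s i)\<^sup>2) *\<^sub>R ((1 / s i) *\<^sub>R z i))"
    using y by simp
  also have "\<dots> \<in> convex hull ((\<lambda>i. (1 / s i) *\<^sub>R z i) ` J)"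
    using assms(1,2) weights
    by (intro convex_sum convex_convex_hull hull_inc imageI) (auto simp: J_def)
  finally show ?thesis
    unfolding J_def .
qed

lemma quadratic_form_dehomogenize:
  assumes "s \<noteq> 0"
  shows "lift_vec 1 ((1 / s) *\<^sub>R z) \<bullet> (M *v lift_vec 1 ((1 / s) *\<^sub>R z)) =
         (lift_vec s z \<bullet> (M *v lift_vec s z)) / s\<^sup>2"
proof -
  have "lift_vec 1 ((1 / s) *\<^sub>R z) = (1 / s) *\<^sub>R lift_vec s z"
    using assms by (simp add: scaleR_lift_vec)
  then show ?thesis
    by (simp add: matrix_vector_mult_scaleR power2_eq_square)
qed

lemma ROG_lifted_slice_subset_convex_hull:
  fixes \<M> :: "(real^(unit + 'k::finite)^(unit + 'k)) set"
  assumes "ROG (S_cone \<M>)"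
  shows "{y. \<exists>Y. lift_mat Y y 1 \<in> S_cone \<M>} \<subseteq>
         convex hull {y. \<forall>M\<in>\<M>. 0 \<le> lift_vec 1 y \<bullet> (M *v lift_vec 1 y)}"
    (is "_ \<subseteq> convex hull ?Q")
proof clarify
  fix y Y
  assume "lift_mat Y y 1 \<in> S_cone \<M>"
  also have "S_cone \<M> = convex hull (S_cone \<M> \<inter> range (\<lambda>x. outer x x))"
    using assms unfolding ROG_def .
  finally have "lift_mat Y y 1 \<in> convex hull (S_cone \<M> \<inter> range (\<lambda>x. outer x x))" .
  then obtain k :: nat and u W
    where u: "\<forall>i\<in>{1..k}. 0 \<le> u i"
      and W: "\<forall>i\<in>{1..k}. W i \<in> S_cone \<M> \<inter> range (\<lambda>x. outer x x)"
      and X: "(\<Sum>i=1..k. u i *\<^sub>R W i) = lift_mat Y y 1"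
    unfolding convex_hull_indexed mem_Collect_eq ball_conj_distrib by blast
  have "\<forall>i\<in>{1..k}. \<exists>v. W i = outer v v"
    using W by blast
  then obtain x where x: "\<forall>i\<in>{1..k}. W i = outer (x i) (x i)"
    by (metis bchoice)
  define s where "s i = x i $ Inl ()" for i
  define z where "z i = (\<chi> j. x i $ Inr j)" for i
  have x_eq: "x i = lift_vec (s i) (z i)" for i
    by (simp add: s_def z_def lift_vec_head_tail)
  have "lift_mat Y y 1 = (\<Sum>i=1..k. u i *\<^sub>R outer (lift_vec (s i) (z i)) (lift_vec (s i) (z i)))"
    unfolding X[symmetric] x_eq[symmetric] using x by (intro sum.cong) simp_all
  then have "y \<in> convex hull ((\<lambda>i. (1 / s i) *\<^sub>R z i) ` {i\<in>{1..k}. s i \<noteq> 0})"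
    using u by (intro mem_convex_hull_dehomogenize) simp_all
  moreover have "(1 / s i) *\<^sub>R z i \<in> ?Q" if "i \<in> {1..k}" "s i \<noteq> 0" for i
  proof (intro CollectI ballI)
    fix M assume "M \<in> \<M>"
    then have "0 \<le> frob M (W i)"
      using W that(1) by (simp add: S_cone_def)
    also have "frob M (W i) = lift_vec (s i) (z i) \<bullet> (M *v lift_vec (s i) (z i))"
      using x that(1) by (simp add: frob_outer flip: x_eq)
    finally show "0 \<le> lift_vec 1 ((1 / s i) *\<^sub>R z i) \<bullet> (M *v lift_vec 1 ((1 / s i) *\<^sub>R z i))"
      using that(2) by (simp add: quadratic_form_dehomogenize)
  qed
  then have "(\<lambda>i. (1 / s i) *\<^sub>R z i) ` {i\<in>{1..k}. s i \<noteq> 0} \<subseteq> ?Q"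
    by blast
  ultimately show "y \<in> convex hull ?Q"
    using hull_mono by blast
qed

theorem ROG_convex_hull_dehomogenized_eq_lifted_slice:
  fixes \<M> :: "(real^(unit + 'k::finite)^(unit + 'k)) set"
  assumes "ROG (S_cone \<M>)"
  shows "convex hull {y. \<forall>M\<in>\<M>. 0 \<le> lift_vec 1 y \<bullet> (M *v lift_vec 1 y)} =
         {y. \<exists>Y. lift_mat Y y 1 \<in> S_cone \<M>}"
proof
  show "convex hull {y. \<forall>M\<in>\<M>. 0 \<le> lift_vec 1 y \<bullet> (M *v lift_vec 1 y)} \<subseteq>
        {y. \<exists>Y. lift_mat Y y 1 \<in> S_cone \<M>}"
    using dehomogenized_subset_lifted_slice convex_lifted_slice by (rule hull_minimal)
qed (rule ROG_lifted_slice_subset_convex_hull[OF assms])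

theorem proposition5p9:
  fixes m :: nat
    and A :: "nat \<Rightarrow> real^'n^'n"
    and b :: "nat \<Rightarrow> real^'n"
    and c :: "nat \<Rightarrow> real"
  assumes symA: "\<forall>i<m. sym_mat (A i)"
    and slater: "\<exists>lam :: nat \<Rightarrow> real. (\<forall>i<m. 0 \<le> lam i) \<and>
                   neg_def (\<Sum>i<m. lam i *\<^sub>R A i)"
    and rog: "ROG (S_cone ((\<lambda>i. lift_mat (A i) (b i) (c i)) ` {..<m}))"
  shows "convex hull {y. \<forall>i<m. 0 \<le> quad (A i) (b i) (c i) y} =
         {y. \<exists>Y. sym_mat Y \<and> psd (Y - outer y y) \<and>
              (\<forall>i<m. 0 \<le> frob (A i) Y + 2 * (b i \<bullet> y) + c i)}"
proof -
  let ?\<M> = "(\<lambda>i. lift_mat (A i) (b i) (c i)) ` {..<m}"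
  have "{y. \<forall>i<m. 0 \<le> quad (A i) (b i) (c i) y} =
        {y. \<forall>M\<in>?\<M>. 0 \<le> lift_vec 1 y \<bullet> (M *v lift_vec 1 y)}"
    by (auto simp: quad_eq_quadratic_form_lift_mat)
  moreover have "{y. \<exists>Y. sym_mat Y \<and> psd (Y - outer y y) \<and>
                   (\<forall>i<m. 0 \<le> frob (A i) Y + 2 * (b i \<bullet> y) + c i)} =
                 {y. \<exists>Y. lift_mat Y y 1 \<in> S_cone ?\<M>}"
    by (auto simp: S_cone_def frob_lift_mat psd_lift_mat_iff dest: psd_minus_outer_imp_sym_mat)
  ultimately show ?thesis
    using ROG_convex_hull_dehomogenized_eq_lifted_slice[OF rog] by simp
qed

end
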